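(* Fix an iteration $t$, an agent $p$, and $\ell>0$. Let $w^{t+1},\lambda^t_p,z^t_p\in\mathbb{R}^{J\times K}$ and $\rho^t>0$ be given and independent of the data. For a dataset $\mathcal{D}$ let $$z^{t+1}_p(\ell;\mathcal{D})=\operatorname{argmin}_{z\in\mathbb{R}^{J\times K}}\langle f'_p(z^t_p;\mathcal{D}),z\rangle+\tfrac{\rho^t}{2}\big\|w^{t+1}-z+\tfrac1{\rho^t}(\lambda^t_p-\tilde\xi^t_p)\big\|^2+\sum_{m=1}^M\ln(1+e^{\ell h^t_m(z)}),$$ where $\tilde\xi^t_p$ has i.i.d. Laplace entries with mean $0$ and scale $\bar\Delta^t_p/\bar\epsilon$ (joint density proportional to $\exp(-\bar\epsilon\|\tilde\xi^t_p\|_1/\bar\Delta^t_p)$), $\bar\epsilon>0$, $\bar\Delta^t_p=\max_{\mathcal{D}'_p\in\widehat{\mathcal{D}}_p}\|f'_p(z^t_p;\mathcal{D}_p)-f'_p(z^t_p;\mathcal{D}'_p)\|_1$, the same noise distribution being used for $\mathcal{D}_p$ and its neighbours. Then for all measurable $\mathcal{S}\subset\mathbb{R}^{J\times K}$ and all $\mathcal{D}'_p\in\widehat{\mathcal{D}}_p$, $$e^{-\bar\epsilon}\,\mathbb{P}(z^{t+1}_p(\ell;\mathcal{D}'_p)\in\mathcal{S})\le\mathbb{P}(z^{t+1}_p(\ell;\mathcal{D}_p)\in\mathcal{S})\le e^{\bar\epsilon}\,\mathbb{P}(z^{t+1}_p(\ell;\mathcal{D}'_p)\in\mathcal{S}).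$$
   Context: $\mathbb{R}^{J\times K}$ carries the Frobenius inner product and norm; $\|\cdot\|_1$ is the entrywise $\ell_1$-norm. For a dataset $\mathcal{D}$, $f_p(z;\mathcal{D})=\frac1I\sum_{(x,y)\in\mathcal{D}}\varphi(z;x,y)+\frac\beta Pr(z)$ with convex loss $\varphi$, convex regularizer $r$, $\beta>0$, $I>0$ fixed; $f'_p(z;\mathcal{D})$ is a fixed subgradient at $z$. $\widehat{\mathcal{D}}_p$ is the collection of datasets differing from $\mathcal{D}_p$ in a single entry. $h^t_1,\dots,h^t_M$ are convex, twice continuously differentiable functions with $\{z:h^t_m(z)\le0\ \forall m\}=\mathcal{W}\cap\{z:\|z-z^t_p\|\le\delta^t\}$ for a compact convex $\mathcal{W}$ and $\delta^t>0$. The objective is strongly convex, so the minimizer is unique. *)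

theory Defs
  imports "HOL-Analysis.Analysis"
begin

text \<open>Points of R^{J x K} are represented as real^'k^'j (J x K matrices);
  the Euclidean norm and inner product on this type are the Frobenius ones.\<close>

definition l1norm :: "real^'k^'j \<Rightarrow> real" where
  "l1norm x = (\<Sum>j\<in>UNIV. \<Sum>k\<in>UNIV. \<bar>x $ j $ k\<bar>)"

definition local_obj ::
  "(real^'k^'j \<Rightarrow> 'x \<Rightarrow> 'y \<Rightarrow> real) \<Rightarrow> (real^'k^'j \<Rightarrow> real) \<Rightarrow> real \<Rightarrow> real \<Rightarrow> real
   \<Rightarrow> ('x \<times> 'y) list \<Rightarrow> real^'k^'j \<Rightarrow> real" where
  "local_obj \<phi> r \<beta> I P D z =
     (1 / I) * sum_list (map (\<lambda>(x, y). \<phi> z x y) D) + (\<beta> / P) * r z"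

definition neighbours :: "'a list \<Rightarrow> 'a list set" where
  "neighbours D = {D'. length D' = length D \<and> card {i. i < length D \<and> D ! i \<noteq> D' ! i} = 1}"

definition sensitivity ::
  "(('x \<times> 'y) list \<Rightarrow> real^'k^'j \<Rightarrow> real^'k^'j) \<Rightarrow> ('x \<times> 'y) list \<Rightarrow> real^'k^'j \<Rightarrow> real" where
  "sensitivity g D z = (SUP D'\<in>neighbours D. l1norm (g D z - g D' z))"

definition laplace_density :: "real \<Rightarrow> real^'k^'j \<Rightarrow> real" where
  "laplace_density b \<xi> = (\<Prod>j\<in>UNIV. \<Prod>k\<in>UNIV. (1 / (2 * b)) * exp (- \<bar>\<xi> $ j $ k\<bar> / b))"

definition laplace_noise :: "real \<Rightarrow> (real^'k^'j) measure" where
  "laplace_noise b = density lborel (\<lambda>\<xi>. ennreal (laplace_density b \<xi>))"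

definition update_obj ::
  "real^'k^'j \<Rightarrow> real \<Rightarrow> real^'k^'j \<Rightarrow> real^'k^'j \<Rightarrow> nat \<Rightarrow> (nat \<Rightarrow> real^'k^'j \<Rightarrow> real) \<Rightarrow> real
   \<Rightarrow> real^'k^'j \<Rightarrow> real^'k^'j \<Rightarrow> real" where
  "update_obj w \<rho> lam g M h ell \<xi> z =
     g \<bullet> z + (\<rho> / 2) * (norm (w - z + (1 / \<rho>) *\<^sub>R (lam - \<xi>)))\<^sup>2
     + (\<Sum>m\<in>{1..M}. ln (1 + exp (ell * h m z)))"

definition update_argmin ::
  "real^'k^'j \<Rightarrow> real \<Rightarrow> real^'k^'j \<Rightarrow> real^'k^'j \<Rightarrow> nat \<Rightarrow> (nat \<Rightarrow> real^'k^'j \<Rightarrow> real) \<Rightarrow> real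
   \<Rightarrow> real^'k^'j \<Rightarrow> real^'k^'j" where
  "update_argmin w \<rho> lam g M h ell \<xi> =
     (THE z. \<forall>u. update_obj w \<rho> lam g M h ell \<xi> z \<le> update_obj w \<rho> lam g M h ell \<xi> u)"

definition twice_cont_diff :: "(real^'k^'j \<Rightarrow> real) \<Rightarrow> bool" where
  "twice_cont_diff f \<longleftrightarrow>
     (\<exists>G :: real^'k^'j \<Rightarrow> real^'k^'j. \<exists>H :: real^'k^'j \<Rightarrow> ((real^'k^'j) \<Rightarrow>\<^sub>L (real^'k^'j)).
        (\<forall>z. (f has_derivative (\<lambda>v. G z \<bullet> v)) (at z)) \<and>
        (\<forall>z. (G has_derivative blinfun_apply (H z)) (at z)) \<and>
        continuous_on UNIV H)"

end

theory Submission imports Defs begin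

text \<open>The data enter the update only through the linear term \<open>\<langle>g, z\<rangle>\<close> with \<open>g = f'_p(z_p; D)\<close>,
  and completing the square absorbs this term into the noise: the update for gradient \<open>g\<close> and
  noise \<open>\<xi>\<close> is the update for gradient \<open>0\<close> and noise \<open>\<xi> + g\<close>. So the update is a fixed function
  of the Laplace mechanism \<open>\<xi> + g\<close>, and the translated Laplace densities for \<open>g\<close> and \<open>g'\<close>
  differ pointwise by a factor of at most \<open>exp (\<parallel>g - g'\<parallel>\<^sub>1 / b) \<le> exp \<epsilon>\<close>.
  This post-processing argument holds for whatever \<open>THE\<close> returns.\<close>

lemma laplace_density_nonneg: "b > 0 \<Longrightarrow> 0 \<le> laplace_density b x"
  unfolding laplace_density_def by (auto intro!: prod_nonneg)

lemma borel_measurable_laplace_density [measurable]: "laplace_density b \<in> borel_measurable borel"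
  unfolding laplace_density_def by measurable (intro borel_measurable_continuous_onI continuous_intros)+

lemma l1norm_minus_commute: "l1norm (x - y) = l1norm (y - x)"
  unfolding l1norm_def by (simp add: abs_minus_commute)

lemma laplace_kernel_shift_le:
  fixes b x c1 c2 :: real
  assumes "b > 0"
  shows "1 / (2 * b) * exp (- \<bar>x - c1\<bar> / b) \<le> exp (\<bar>c1 - c2\<bar> / b) * (1 / (2 * b) * exp (- \<bar>x - c2\<bar> / b))"
proof -
  have "- \<bar>x - c1\<bar> / b \<le> \<bar>c1 - c2\<bar> / b + - \<bar>x - c2\<bar> / b"
    using assms by (simp add: divide_simps)
  then have "exp (- \<bar>x - c1\<bar> / b) \<le> exp (\<bar>c1 - c2\<bar> / b) * exp (- \<bar>x - c2\<bar> / b)"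
    by (simp flip: exp_add)
  then show ?thesis
    using assms by (simp add: divide_right_mono)
qed

lemma laplace_density_shift_le:
  fixes x c1 c2 :: "real^'k^'j"
  assumes b: "b > 0"
  shows "laplace_density b (x - c1) \<le> exp (l1norm (c1 - c2) / b) * laplace_density b (x - c2)"
proof -
  have "laplace_density b (x - c1) \<le> (\<Prod>j\<in>UNIV. \<Prod>k\<in>UNIV. exp (\<bar>(c1 - c2) $ j $ k\<bar> / b) *
          (1 / (2 * b) * exp (- \<bar>(x - c2) $ j $ k\<bar> / b)))"
    unfolding laplace_density_def
    by (intro prod_mono conjI) (use b laplace_kernel_shift_le[OF b] in \<open>auto intro!: prod_nonneg\<close>)
  also have "\<dots> = (\<Prod>j\<in>UNIV. \<Prod>k\<in>UNIV. exp (\<bar>(c1 - c2) $ j $ k\<bar> / b)) * laplace_density b (x - c2)"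
    unfolding laplace_density_def prod.distrib by simp
  also have "(\<Prod>j\<in>UNIV. \<Prod>k\<in>UNIV. exp (\<bar>(c1 - c2) $ j $ k\<bar> / b)) = exp (l1norm (c1 - c2) / b)"
    unfolding l1norm_def by (simp add: exp_sum sum_divide_distrib)
  finally show ?thesis .
qed

lemma nn_integral_lborel_translate:
  fixes f :: "'a::euclidean_space \<Rightarrow> ennreal"
  assumes "f \<in> borel_measurable borel"
  shows "(\<integral>\<^sup>+x. f (c + x) \<partial>lborel) = (\<integral>\<^sup>+x. f x \<partial>lborel)"
proof -
  have "(\<integral>\<^sup>+x. f x \<partial>lborel) = (\<integral>\<^sup>+x. f x \<partial>distr lborel borel ((+) c))"
    by (simp add: lborel_distr_plus)
  also have "\<dots> = (\<integral>\<^sup>+x. f (c + x) \<partial>lborel)"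
    by (rule nn_integral_distr) (auto simp: assms)
  finally show ?thesis by simp
qed

lemma translate_sets_borel_iff:
  fixes c :: "'a::euclidean_space"
  shows "{x. x + c \<in> A} \<in> sets borel \<longleftrightarrow> A \<in> sets borel"
proof -
  have preimage: "{x. x + d \<in> B} \<in> sets borel" if "B \<in> sets borel" for B and d :: 'a
    using measurable_sets[of "\<lambda>x. x + d" borel borel B] that by (simp add: vimage_def)
  have "A = {x. x + (- c) \<in> {x. x + c \<in> A}}"
    by simp
  then show ?thesis
    using preimage[of A c] preimage[of "{x. x + c \<in> A}" "- c"] by metis
qed

lemma emeasure_laplace_noise_translate:
  fixes c :: "real^'k^'j"
  assumes A: "A \<in> sets borel"
  shows "emeasure (laplace_noise b) {\<xi>. \<xi> + c \<in> A}
    = (\<integral>\<^sup>+\<eta>. ennreal (laplace_density b (\<eta> - c)) * indicator A \<eta> \<partial>lborel)"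
proof -
  have "emeasure (laplace_noise b) {\<xi>. \<xi> + c \<in> A}
      = (\<integral>\<^sup>+\<xi>. ennreal (laplace_density b \<xi>) * indicator {\<xi>. \<xi> + c \<in> A} \<xi> \<partial>lborel)"
    unfolding laplace_noise_def
    by (rule emeasure_density) (auto simp: A translate_sets_borel_iff)
  also have "\<dots> = (\<integral>\<^sup>+\<xi>. ennreal (laplace_density b ((c + \<xi>) - c)) * indicator A (c + \<xi>) \<partial>lborel)"
    by (intro nn_integral_cong) (auto simp: indicator_def add.commute)
  also have "\<dots> = (\<integral>\<^sup>+\<eta>. ennreal (laplace_density b (\<eta> - c)) * indicator A \<eta> \<partial>lborel)"
    by (rule nn_integral_lborel_translate) (use A in measurable)
  finally show ?thesis .
qed

text \<open>No measurability of \<open>A\<close> is assumed: the update need not be Borel in the noise, and for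
  non-Borel \<open>A\<close> the left-hand side is \<open>0\<close>.\<close>

lemma emeasure_laplace_noise_translate_le:
  fixes c1 c2 :: "real^'k^'j"
  assumes b: "b > 0" and dist: "l1norm (c1 - c2) / b \<le> \<epsilon>"
  shows "emeasure (laplace_noise b) {\<xi>. \<xi> + c1 \<in> A}
    \<le> ennreal (exp \<epsilon>) * emeasure (laplace_noise b) {\<xi>. \<xi> + c2 \<in> A}"
proof (cases "A \<in> sets borel")
  case False
  then have "emeasure (laplace_noise b) {\<xi>. \<xi> + c1 \<in> A} = 0"
    unfolding laplace_noise_def by (intro emeasure_notin_sets) (simp add: translate_sets_borel_iff)
  then show ?thesis by simp
next
  case A: True
  have pointwise: "ennreal (laplace_density b (\<eta> - c1))
      \<le> ennreal (exp \<epsilon>) * ennreal (laplace_density b (\<eta> - c2))" for \<eta>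
  proof -
    have "laplace_density b (\<eta> - c1) \<le> exp (l1norm (c1 - c2) / b) * laplace_density b (\<eta> - c2)"
      by (rule laplace_density_shift_le[OF b])
    also have "\<dots> \<le> exp \<epsilon> * laplace_density b (\<eta> - c2)"
      using dist b by (intro mult_right_mono laplace_density_nonneg) auto
    finally show ?thesis
      using laplace_density_nonneg[OF b, of "\<eta> - c2"] by (simp add: ennreal_leI flip: ennreal_mult)
  qed
  have "(\<integral>\<^sup>+\<eta>. ennreal (laplace_density b (\<eta> - c1)) * indicator A \<eta> \<partial>lborel)
     \<le> (\<integral>\<^sup>+\<eta>. ennreal (exp \<epsilon>) * (ennreal (laplace_density b (\<eta> - c2)) * indicator A \<eta>) \<partial>lborel)"
    using pointwise by (intro nn_integral_mono) (auto simp: indicator_def)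
  also have "\<dots> = ennreal (exp \<epsilon>) * (\<integral>\<^sup>+\<eta>. ennreal (laplace_density b (\<eta> - c2)) * indicator A \<eta> \<partial>lborel)"
    by (rule nn_integral_cmult) (use A in measurable)
  finally show ?thesis
    by (simp add: emeasure_laplace_noise_translate[OF A])
qed

text \<open>The reverse bound excludes \<open>X < \<infinity> = Y\<close>.\<close>

lemma enn2real_le_of_mutual_bounds:
  fixes X Y :: ennreal
  assumes "c \<ge> 0" and XY: "X \<le> ennreal c * Y" and YX: "Y \<le> ennreal c * X"
  shows "enn2real X \<le> c * enn2real Y"
proof (cases "Y = top")
  case True
  then have "X = top"
    using YX by (metis ennreal_mult_eq_top_iff ennreal_neq_top top.extremum_uniqueI)
  then show ?thesis
    using \<open>c \<ge> 0\<close> by simp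
next
  case False
  then have "ennreal c * Y < top"
    by (simp add: ennreal_mult_less_top top.not_eq_extremum)
  then have "enn2real X \<le> enn2real (ennreal c * Y)"
    by (rule enn2real_mono[OF XY])
  also have "\<dots> = c * enn2real Y"
    using \<open>c \<ge> 0\<close> by (simp add: enn2real_mult)
  finally show ?thesis .
qed

lemma laplace_mechanism_measure_le:
  fixes c1 c2 :: "real^'k^'j"
  assumes "b > 0" and "l1norm (c1 - c2) / b \<le> \<epsilon>"
  shows "measure (laplace_noise b) {\<xi>. \<xi> + c1 \<in> A}
    \<le> exp \<epsilon> * measure (laplace_noise b) {\<xi>. \<xi> + c2 \<in> A}"
  unfolding measure_def
  using assms l1norm_minus_commute[of c1 c2]
  by (intro enn2real_le_of_mutual_bounds emeasure_laplace_noise_translate_le) auto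

lemma update_obj_shift:
  assumes rho: "\<rho> > 0"
  shows "update_obj w \<rho> lam 0 M h ell (\<xi> + g) z = update_obj w \<rho> lam g M h ell \<xi> z
     + (- (g \<bullet> w) - (1 / \<rho>) * (g \<bullet> (lam - \<xi>)) + (g \<bullet> g) / (2 * \<rho>))"
proof -
  define v where "v = w - z + (1 / \<rho>) *\<^sub>R (lam - \<xi>)"
  have shifted: "w - z + (1 / \<rho>) *\<^sub>R (lam - (\<xi> + g)) = v - (1 / \<rho>) *\<^sub>R g"
    unfolding v_def by (simp add: algebra_simps)
  have square: "(norm (v - (1 / \<rho>) *\<^sub>R g))\<^sup>2 = (norm v)\<^sup>2 - 2 * (1 / \<rho>) * (g \<bullet> v) + (1 / \<rho>)\<^sup>2 * (g \<bullet> g)"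
    unfolding power2_norm_eq_inner
    by (simp add: inner_diff_left inner_diff_right inner_commute power2_eq_square algebra_simps)
  have linear: "g \<bullet> v = g \<bullet> w - g \<bullet> z + (1 / \<rho>) * (g \<bullet> (lam - \<xi>))"
    unfolding v_def by (simp add: inner_diff_right inner_add_right)
  show ?thesis
    unfolding update_obj_def shifted v_def[symmetric] square using rho
    by (simp add: linear power2_eq_square field_simps)
qed

lemma update_argmin_shift:
  assumes "\<rho> > 0"
  shows "update_argmin w \<rho> lam g M h ell \<xi> = update_argmin w \<rho> lam 0 M h ell (\<xi> + g)"
  unfolding update_argmin_def update_obj_shift[OF assms] by simp

theorem proposition5:
  fixes \<phi> :: "real^'k^'j \<Rightarrow> 'x \<Rightarrow> 'y \<Rightarrow> real"
    and r :: "real^'k^'j \<Rightarrow> real"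
    and \<beta> I P :: real
    and fp' :: "('x \<times> 'y) list \<Rightarrow> real^'k^'j \<Rightarrow> real^'k^'j"
    and Dp :: "('x \<times> 'y) list"
    and w lam zp :: "real^'k^'j"
    and \<rho> ell \<epsilon> \<delta> :: real
    and M :: nat
    and h :: "nat \<Rightarrow> real^'k^'j \<Rightarrow> real"
    and W :: "(real^'k^'j) set"
  assumes phi_convex: "\<And>x y. convex_on UNIV (\<lambda>z. \<phi> z x y)"
    and r_convex: "convex_on UNIV r"
    and beta_pos: "\<beta> > 0" and I_pos: "I > 0" and P_pos: "P > 0"
    and subgrad: "\<And>D z u. local_obj \<phi> r \<beta> I P D u \<ge>
                     local_obj \<phi> r \<beta> I P D z + fp' D z \<bullet> (u - z)"
    and h_convex: "\<And>m. m \<in> {1..M} \<Longrightarrow> convex_on UNIV (h m)"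
    and h_C2: "\<And>m. m \<in> {1..M} \<Longrightarrow> twice_cont_diff (h m)"
    and W_compact: "compact W" and W_convex: "convex W"
    and delta_pos: "\<delta> > 0"
    and h_feasible: "{z. \<forall>m\<in>{1..M}. h m z \<le> 0} = W \<inter> cball zp \<delta>"
    and rho_pos: "\<rho> > 0" and ell_pos: "ell > 0" and eps_pos: "\<epsilon> > 0"
    and sens_bdd: "bdd_above ((\<lambda>D'. l1norm (fp' Dp zp - fp' D' zp)) ` neighbours Dp)"
    and sens_pos: "sensitivity fp' Dp zp > 0"
    and S_meas: "S \<in> sets borel"
    and nbr: "Dp' \<in> neighbours Dp"
  shows "exp (- \<epsilon>) *
           measure (laplace_noise (sensitivity fp' Dp zp / \<epsilon>))
             {\<xi>. update_argmin w \<rho> lam (fp' Dp' zp) M h ell \<xi> \<in> S}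
         \<le> measure (laplace_noise (sensitivity fp' Dp zp / \<epsilon>))
             {\<xi>. update_argmin w \<rho> lam (fp' Dp zp) M h ell \<xi> \<in> S}
       \<and> measure (laplace_noise (sensitivity fp' Dp zp / \<epsilon>))
             {\<xi>. update_argmin w \<rho> lam (fp' Dp zp) M h ell \<xi> \<in> S}
         \<le> exp \<epsilon> *
           measure (laplace_noise (sensitivity fp' Dp zp / \<epsilon>))
             {\<xi>. update_argmin w \<rho> lam (fp' Dp' zp) M h ell \<xi> \<in> S}"
proof -
  define b where "b = sensitivity fp' Dp zp / \<epsilon>"
  define A where "A = {\<eta>. update_argmin w \<rho> lam 0 M h ell \<eta> \<in> S}"
  define \<mu> where "\<mu> g = measure (laplace_noise b) {\<xi>. update_argmin w \<rho> lam g M h ell \<xi> \<in> S}" for g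
  have \<mu>_translate: "\<mu> g = measure (laplace_noise b) {\<xi>. \<xi> + g \<in> A}" for g
    unfolding \<mu>_def A_def update_argmin_shift[OF rho_pos, of w lam g] by simp
  have b_pos: "b > 0"
    using sens_pos eps_pos by (simp add: b_def)
  have "l1norm (fp' Dp zp - fp' Dp' zp) \<le> sensitivity fp' Dp zp"
    unfolding sensitivity_def by (rule cSUP_upper[OF nbr sens_bdd])
  then have dist: "l1norm (fp' Dp zp - fp' Dp' zp) / b \<le> \<epsilon>"
    using sens_pos eps_pos by (simp add: b_def field_simps)
  have upper: "\<mu> (fp' Dp zp) \<le> exp \<epsilon> * \<mu> (fp' Dp' zp)"
    unfolding \<mu>_translate by (rule laplace_mechanism_measure_le[OF b_pos dist])
  have "\<mu> (fp' Dp' zp) \<le> exp \<epsilon> * \<mu> (fp' Dp zp)"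
    unfolding \<mu>_translate using dist l1norm_minus_commute[of "fp' Dp zp"]
    by (intro laplace_mechanism_measure_le[OF b_pos]) simp
  then have lower: "exp (- \<epsilon>) * \<mu> (fp' Dp' zp) \<le> \<mu> (fp' Dp zp)"
    by (simp add: exp_minus divide_simps mult.commute)
  show ?thesis
    using upper lower by (simp add: \<mu>_def b_def)
qed

end
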